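(* Let $\mathbb{N}_0[[x]]$ be the semidomain of formal power series with coefficients in $\mathbb{N}_0$ (a subsemiring of $\mathbb{Z}[[x]]$). Then $\mathbb{N}_0[[x]]$ is not atomic. (In particular, atomicity does not ascend from the UFS $\mathbb{N}_0$ to its semidomain of formal power series.)
   Context: For a semidomain $S$ (a subset of an integral domain containing $0,1$ and closed under $+$ and $\cdot$), $S^*=S\setminus\{0\}$ is a multiplicative monoid; an atom is a nonunit $a\in S^*$ such that $a=bc$ with $b,c\in S^*$ forces $b$ or $c$ to be a unit; $S$ is atomic if every nonunit of $S^*$ is a finite product of atoms. $S$ is a UFS if every nonunit of $S^*$ factors into atoms uniquely up to order and unit factors. *)

theory Defs
  imports "HOL-Computational_Algebra.Formal_Power_Series"
begin

definition semidomain :: "'a::idom set \<Rightarrow> bool" where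
  "semidomain S \<longleftrightarrow> 0 \<in> S \<and> 1 \<in> S \<and>
     (\<forall>a\<in>S. \<forall>b\<in>S. a + b \<in> S) \<and> (\<forall>a\<in>S. \<forall>b\<in>S. a * b \<in> S)"

definition sd_unit :: "'a::idom set \<Rightarrow> 'a \<Rightarrow> bool" where
  "sd_unit S u \<longleftrightarrow> u \<in> S - {0} \<and> (\<exists>v\<in>S - {0}. u * v = 1)"

definition sd_atom :: "'a::idom set \<Rightarrow> 'a \<Rightarrow> bool" where
  "sd_atom S a \<longleftrightarrow> a \<in> S - {0} \<and> \<not> sd_unit S a \<and>
     (\<forall>b\<in>S - {0}. \<forall>c\<in>S - {0}. a = b * c \<longrightarrow> sd_unit S b \<or> sd_unit S c)"

definition sd_atomic :: "'a::idom set \<Rightarrow> bool" where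
  "sd_atomic S \<longleftrightarrow> (\<forall>x\<in>S - {0}. \<not> sd_unit S x \<longrightarrow>
     (\<exists>as. as \<noteq> [] \<and> (\<forall>a\<in>set as. sd_atom S a) \<and> x = prod_list as))"

definition N0_fps :: "int fps set" where
  "N0_fps = {f. \<forall>n. 0 \<le> fps_nth f n}"

end

theory Submission
  imports Defs
begin

text \<open>A divisor \<open>a\<close> of \<open>1/(1-x) = \<Sum>\<^sub>n x\<^sup>n\<close> in \<open>\<nat>\<^sub>0[[x]]\<close> has coefficients in \<open>{0,1}\<close>, and
if \<open>a c = 1/(1-x)\<close> the supports \<open>A, C\<close> of \<open>a, c\<close> tile \<open>\<nat>\<close>: every \<open>n\<close> is uniquely
\<open>a + c\<close> with \<open>a \<in> A\<close>, \<open>c \<in> C\<close>. If \<open>m\<close> is the least positive element of \<open>C\<close>, then \<open>C \<subseteq> m\<nat>\<close>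
and \<open>A\<close> is a union of blocks \<open>{mq, \<dots>, mq + m - 1}\<close>; after possibly swapping the roles
of \<open>A\<close> and \<open>C\<close> and dividing by the least positive element of \<open>A\<close>, an infinite \<open>A\<close> has
the form \<open>d{0, \<dots>, k-1} \<oplus> dkB\<close> with \<open>k \<ge> 2\<close>. Then \<open>a\<close> factors as the nonunits
\<open>\<Sum>\<^sub>i\<^sub><\<^sub>k x\<^sup>d\<^sup>i\<close> and \<open>\<Sum>\<^sub>b\<^sub>\<in>\<^sub>B x\<^sup>d\<^sup>k\<^sup>b\<close>, so no atom divides \<open>1/(1-x)\<close> with infinite support. Since
a finite product of polynomials is a polynomial, \<open>1/(1-x)\<close> is no product of atoms.\<close>

definition tiling :: "nat set \<Rightarrow> nat set \<Rightarrow> bool" where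
  "tiling A C \<longleftrightarrow> 0 \<in> A \<and> 0 \<in> C \<and> (\<forall>n. \<exists>a\<in>A. \<exists>c\<in>C. n = a + c) \<and>
     (\<forall>a\<in>A. \<forall>c\<in>C. \<forall>a'\<in>A. \<forall>c'\<in>C. a + c = a' + c' \<longrightarrow> a = a')"

lemma tiling_zero: "tiling A C \<Longrightarrow> 0 \<in> A" "tiling A C \<Longrightarrow> 0 \<in> C"
  unfolding tiling_def by blast+

lemma tiling_commute: "tiling A C \<Longrightarrow> tiling C A"
  unfolding tiling_def by (metis add.commute add_left_cancel)

lemma tiling_decomp:
  assumes "tiling A C"
  obtains a c where "a \<in> A" "c \<in> C" "n = a + c"
  using assms unfolding tiling_def by blast

lemma tiling_unique:
  assumes "tiling A C" "a \<in> A" "c \<in> C" "a' \<in> A" "c' \<in> C" "a + c = a' + c'"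
  shows "a = a'" "c = c'"
  using assms unfolding tiling_def by (metis add_left_cancel)+

lemma tiling_one_notin: "tiling A C \<Longrightarrow> 1 \<in> C \<Longrightarrow> 1 \<notin> A"
  using tiling_unique(1)[of A C 1 0 0 1] tiling_zero by fastforce

lemma tiling_eq_UNIV: "tiling A C \<Longrightarrow> \<forall>c\<in>C. c = 0 \<Longrightarrow> A = UNIV"
  by (metis UNIV_eq_I add.right_neutral tiling_decomp)

lemma tiling_scale_down:
  assumes T: "tiling A C" and d: "0 < d" and dvd: "\<forall>a\<in>A. d dvd a"
  shows "tiling {k. d * k \<in> A} {k. d * k \<in> C}"
  unfolding tiling_def
proof (intro conjI allI ballI impI)
  show "0 \<in> {k. d * k \<in> A}" "0 \<in> {k. d * k \<in> C}"
    using tiling_zero[OF T] by auto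
next
  fix n
  obtain a c where ac: "a \<in> A" "c \<in> C" "d * n = a + c"
    using tiling_decomp[OF T] by blast
  obtain a' where a': "a = d * a'" using dvd ac by blast
  have "d dvd c" using ac a' by (metis dvd_add_right_iff dvd_triv_left)
  then obtain c' where c': "c = d * c'" by blast
  have "n = a' + c'" using ac a' c' d by (simp add: distrib_left[symmetric])
  then show "\<exists>a\<in>{k. d * k \<in> A}. \<exists>c\<in>{k. d * k \<in> C}. n = a + c"
    using ac a' c' by auto
next
  fix a c a' c'
  assume "a \<in> {k. d * k \<in> A}" "c \<in> {k. d * k \<in> C}" "a' \<in> {k. d * k \<in> A}"
    "c' \<in> {k. d * k \<in> C}" "a + c = a' + c'"
  then have "d * a = d * a'"
    using tiling_unique(1)[OF T, of "d * a" "d * c" "d * a'" "d * c'"]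
    by (simp add: distrib_left[symmetric])
  then show "a = a'" using d by simp
qed

lemma obtain_least_positive:
  fixes C :: "nat set"
  assumes "\<exists>c\<in>C. c \<noteq> 0"
  obtains m where "0 < m" "m \<in> C" "\<forall>c\<in>C. 0 < c \<longrightarrow> m \<le> c"
proof -
  define m where "m = (LEAST c. c \<in> C \<and> 0 < c)"
  have "m \<in> C \<and> 0 < m" unfolding m_def by (rule LeastI_ex) (use assms in auto)
  moreover have "\<forall>c\<in>C. 0 < c \<longrightarrow> m \<le> c" unfolding m_def by (auto intro: Least_le)
  ultimately show ?thesis using that by blast
qed

lemma block_closed_below:
  fixes m N q j :: nat
  assumes closed: "\<forall>n<N. \<not> m dvd n \<longrightarrow> (n \<in> A \<longleftrightarrow> n - 1 \<in> A)"
  shows "j < m \<Longrightarrow> m * q + j < N \<Longrightarrow> m * q + j \<in> A \<longleftrightarrow> m * q \<in> A"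
proof (induction j)
  case 0
  then show ?case by simp
next
  case (Suc j)
  have "\<not> m dvd (m * q + Suc j)"
    using Suc.prems by (metis dvd_add_right_iff dvd_triv_left nat_dvd_not_less zero_less_Suc)
  then have "m * q + Suc j \<in> A \<longleftrightarrow> m * q + j \<in> A" using closed Suc.prems by auto
  then show ?case using Suc by auto
qed

context
  fixes A C :: "nat set" and m :: nat
  assumes tiling: "tiling A C" and m_pos: "0 < m" and m_in: "m \<in> C"
    and m_least: "\<forall>c\<in>C. 0 < c \<longrightarrow> m \<le> c"
begin

text \<open>Whether \<open>m\<close> divides the elements of \<open>C\<close> below \<open>N\<close> and whether \<open>A\<close> is a union of
\<open>m\<close>-blocks below \<open>N\<close> depend on each other, so both are proved by a joint induction on \<open>N\<close>.\<close>

lemma least_gap_dvd_step: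
  assumes dvd_below: "\<forall>c<N. c \<in> C \<longrightarrow> m dvd c"
    and closed_below: "\<forall>n<N. \<not> m dvd n \<longrightarrow> (n \<in> A \<longleftrightarrow> n - 1 \<in> A)"
    and N_in: "N \<in> C"
  shows "m dvd N"
proof (rule ccontr)
  assume not_dvd: "\<not> m dvd N"
  have m_le: "m \<le> N" using m_least N_in not_dvd by (metis dvd_0_right gr0I)
  define q r where "q = N div m" and "r = N mod m"
  have N_eq: "N = m * q + r" unfolding q_def r_def by simp
  have r: "0 < r" "r < m" using not_dvd m_pos unfolding r_def by (auto simp: dvd_eq_mod_eq_0)
  have q: "1 \<le> q" using m_le m_pos unfolding q_def by (simp add: Suc_leI div_greater_zero_iff)
  obtain b c where bc: "b \<in> A" "c \<in> C" "m * q = b + c"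
    using tiling_decomp[OF tiling] by blast
  have "m dvd c" using dvd_below bc N_eq r by auto
  then have "m dvd b" using bc by (metis dvd_add_left_iff dvd_triv_left)
  then obtain q' where b: "b = m * q'" by blast
  show False
  proof (cases "c = 0")
    case False
    \<comment> \<open>then \<open>b + r\<close> lies in the block of \<open>b \<in> A\<close>, and \<open>N = (b + r) + c = 0 + N\<close>\<close>
    have "b + r \<in> A"
      using block_closed_below[OF closed_below r(2), of q'] bc b False N_eq by simp
    moreover have "(b + r) + c = 0 + N" using bc N_eq by simp
    ultimately show False
      using tiling_unique(1)[OF tiling _ bc(2) tiling_zero(1)[OF tiling] N_in] r by simp
  next
    case True
    \<comment> \<open>then \<open>mq \<in> A\<close>, while \<open>m - r < m\<close> lies in \<open>A\<close> by minimality of \<open>m\<close>, and \<open>mq + m = (m - r) + N\<close>\<close>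
    have "m - r \<in> A"
    proof -
      obtain a c where ac: "a \<in> A" "c \<in> C" "m - r = a + c"
        using tiling_decomp[OF tiling] by blast
      then have "c = 0" using m_least r by fastforce
      then show ?thesis using ac by simp
    qed
    moreover have "m * q + m = (m - r) + N" using N_eq r by simp
    ultimately have "m * q = m - r"
      using tiling_unique(1)[OF tiling _ m_in _ N_in] bc True by simp
    then show False using q r m_pos
      by (metis diff_less le_Suc_ex less_not_refl3 mult.right_neutral nat_mult_less_cancel1 not_less)
  qed
qed

lemma least_gap_block_step:
  assumes dvd_below: "\<forall>c<N. c \<in> C \<longrightarrow> m dvd c"
    and closed_below: "\<forall>n<N. \<not> m dvd n \<longrightarrow> (n \<in> A \<longleftrightarrow> n - 1 \<in> A)"
    and not_dvd: "\<not> m dvd N"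
  shows "N \<in> A \<longleftrightarrow> N - 1 \<in> A"
proof
  assume N_in: "N \<in> A"
  show "N - 1 \<in> A"
  proof (rule ccontr)
    assume N1_notin: "N - 1 \<notin> A"
    obtain b c where bc: "b \<in> A" "c \<in> C" "N - 1 = b + c"
      using tiling_decomp[OF tiling] by blast
    have N0: "N \<noteq> 0" using not_dvd by (metis dvd_0_right)
    have c0: "c \<noteq> 0" using N1_notin bc by (metis add_0_right)
    have "m dvd c" using dvd_below bc N0 by auto
    then have "\<not> m dvd (b + 1)" using not_dvd bc N0
      by (metis Suc_pred' add.commute add_Suc_right bot_nat_0.not_eq_extremum dvd_add_left_iff
          plus_1_eq_Suc)
    moreover have "b + 1 < N" using bc c0 N0 by linarith
    ultimately have "b + 1 \<in> A" using closed_below bc by auto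
    moreover have "N + 0 = (b + 1) + c" using bc N0 by simp
    ultimately have "N = b + 1"
      using tiling_unique(1)[OF tiling N_in tiling_zero(2)[OF tiling] _ bc(2)] by simp
    then show False using bc c0 by simp
  qed
next
  assume N1_in: "N - 1 \<in> A"
  show "N \<in> A"
  proof (rule ccontr)
    assume N_notin: "N \<notin> A"
    obtain b c where bc: "b \<in> A" "c \<in> C" "N = b + c"
      using tiling_decomp[OF tiling] by blast
    have c0: "c \<noteq> 0" using N_notin bc by (metis add_0_right)
    have "c \<noteq> N" using least_gap_dvd_step[OF dvd_below closed_below] bc not_dvd by metis
    then have "m dvd c" using dvd_below bc by auto
    then have b_not_dvd: "\<not> m dvd b" using not_dvd bc by (metis dvd_add)
    then have b0: "b \<noteq> 0" by (metis dvd_0_right)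
    have "b - 1 \<in> A" using closed_below b_not_dvd bc c0 by auto
    moreover have "(N - 1) + 0 = (b - 1) + c" using bc b0 by simp
    ultimately have "N - 1 = b - 1"
      using tiling_unique(1)[OF tiling N1_in tiling_zero(2)[OF tiling] _ bc(2)] by simp
    then show False using bc c0 b0 by simp
  qed
qed

lemma least_gap_below:
  "(\<forall>c<N. c \<in> C \<longrightarrow> m dvd c) \<and> (\<forall>n<N. \<not> m dvd n \<longrightarrow> (n \<in> A \<longleftrightarrow> n - 1 \<in> A))"
proof (induction N)
  case 0
  then show ?case by simp
next
  case (Suc N)
  then show ?case
    using least_gap_dvd_step[of N] least_gap_block_step[of N] by (auto simp: less_Suc_eq)
qed

lemma tiling_dvd_least_gap: "c \<in> C \<Longrightarrow> m dvd c"
  using conjunct1[OF least_gap_below[of "Suc c"]] by simp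

lemma tiling_blocks_least_gap: "n \<in> A \<longleftrightarrow> m * (n div m) \<in> A"
proof -
  have "m * (n div m) + n mod m \<in> A \<longleftrightarrow> m * (n div m) \<in> A"
    using m_pos by (intro block_closed_below[OF conjunct2[OF least_gap_below[of "Suc n"]]]) simp_all
  then show ?thesis by simp
qed

end

lemma tiling_blocks_if_one_notin:
  assumes T: "tiling A C" and "1 \<notin> C"
  obtains k where "2 \<le> k" "\<forall>n. n \<in> A \<longleftrightarrow> k * (n div k) \<in> A"
proof (cases "\<forall>c\<in>C. c = 0")
  case True
  then show ?thesis using that[of 2] tiling_eq_UNIV[OF T] by simp
next
  case False
  then obtain m where m: "0 < m" "m \<in> C" "\<forall>c\<in>C. 0 < c \<longrightarrow> m \<le> c"
    using obtain_least_positive by blast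
  moreover have "m \<noteq> 1" using m(2) \<open>1 \<notin> C\<close> by blast
  ultimately have "2 \<le> m" by linarith
  then show ?thesis using that tiling_blocks_least_gap[OF T m] by blast
qed

text \<open>\<open>block_structured d k A\<close> says \<open>A = d{0, \<dots>, k-1} \<oplus> dkB\<close> with \<open>B = {b. dkb \<in> A}\<close>.\<close>

definition block_structured :: "nat \<Rightarrow> nat \<Rightarrow> nat set \<Rightarrow> bool" where
  "block_structured d k A \<longleftrightarrow> 1 \<le> d \<and> 2 \<le> k \<and>
     (\<forall>n. n \<in> A \<longleftrightarrow> d dvd n \<and> d * k * (n div (d * k)) \<in> A)"

lemma tiling_block_structured:
  assumes T: "tiling A C" and inf: "infinite A"
  obtains d k where "block_structured d k A"
proof (cases "1 \<in> C")
  case False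
  then obtain k where k: "2 \<le> k" "\<forall>n. n \<in> A \<longleftrightarrow> k * (n div k) \<in> A"
    using tiling_blocks_if_one_notin[OF T] by blast
  have "n \<in> A \<longleftrightarrow> 1 dvd n \<and> 1 * k * (n div (1 * k)) \<in> A" for n
    using k(2)[rule_format, of n] by simp
  then have "block_structured 1 k A"
    unfolding block_structured_def using k(1) by (intro conjI allI) simp_all
  then show ?thesis by (rule that)
next
  case True
  \<comment> \<open>then \<open>A \<subseteq> d\<nat>\<close> for the least positive \<open>d \<in> A\<close>, and \<open>A/d\<close> tiles with \<open>C/d\<close>, where \<open>1 \<in> A/d\<close>\<close>
  have "\<exists>a\<in>A. a \<noteq> 0"
  proof (rule ccontr)
    assume "\<not> (\<exists>a\<in>A. a \<noteq> 0)"
    then have "A \<subseteq> {0}" by blast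
    then have "finite A" by (rule finite_subset) simp
    then show False using inf by blast
  qed
  then obtain d where d: "0 < d" "d \<in> A" "\<forall>a\<in>A. 0 < a \<longrightarrow> d \<le> a"
    using obtain_least_positive by blast
  have dvd: "\<forall>a\<in>A. d dvd a" using tiling_dvd_least_gap[OF tiling_commute[OF T] d] by blast
  define A' C' where "A' = {k. d * k \<in> A}" and "C' = {k. d * k \<in> C}"
  have T': "tiling A' C'" unfolding A'_def C'_def using tiling_scale_down[OF T d(1) dvd] .
  have "1 \<in> A'" unfolding A'_def using d by simp
  then have "1 \<notin> C'" using tiling_one_notin[OF tiling_commute[OF T']] by blast
  then obtain k where k: "2 \<le> k" "\<forall>n. n \<in> A' \<longleftrightarrow> k * (n div k) \<in> A'"
    using tiling_blocks_if_one_notin[OF T'] by blast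
  have A_iff: "n \<in> A \<longleftrightarrow> d dvd n \<and> d * k * (n div (d * k)) \<in> A" for n
  proof -
    have "n \<in> A \<longleftrightarrow> d dvd n \<and> d * (n div d) \<in> A" using dvd by auto
    also have "\<dots> \<longleftrightarrow> d dvd n \<and> d * (k * (n div d div k)) \<in> A"
      using k(2)[rule_format, of "n div d"] unfolding A'_def by blast
    finally show ?thesis by (simp add: div_mult2_eq mult.assoc)
  qed
  have "block_structured d k A"
    unfolding block_structured_def using d(1) k(1) by (intro conjI allI A_iff) simp_all
  then show ?thesis by (rule that)
qed

definition fps_indicator :: "nat set \<Rightarrow> int fps" where
  "fps_indicator A = Abs_fps (\<lambda>n. of_bool (n \<in> A))"

lemma fps_nth_indicator [simp]: "fps_nth (fps_indicator A) n = of_bool (n \<in> A)"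
  by (simp add: fps_indicator_def)

lemma fps_indicator_eq_0_iff: "fps_indicator A = 0 \<longleftrightarrow> A = {}"
  by (auto simp: fps_eq_iff)

lemma fps_indicator_eq_1_iff: "fps_indicator A = 1 \<longleftrightarrow> A = {0}"
  by (auto simp: fps_eq_iff split: if_splits)

definition fps_support :: "'a::zero fps \<Rightarrow> nat set" where
  "fps_support f = {n. fps_nth f n \<noteq> 0}"

lemma fps_support_mult:
  fixes f g :: "'a::semiring_0 fps"
  shows "fps_support (f * g) \<subseteq> (\<lambda>(i, j). i + j) ` (fps_support f \<times> fps_support g)"
proof
  fix n assume "n \<in> fps_support (f * g)"
  then have "(\<Sum>i=0..n. fps_nth f i * fps_nth g (n - i)) \<noteq> 0"
    by (simp add: fps_support_def fps_mult_nth)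
  then obtain i where "i \<le> n" "fps_nth f i * fps_nth g (n - i) \<noteq> 0"
    by (meson atLeastAtMost_iff sum.not_neutral_contains_not_neutral)
  then show "n \<in> (\<lambda>(i, j). i + j) ` (fps_support f \<times> fps_support g)"
    by (auto simp: fps_support_def intro!: image_eqI[of _ _ "(i, n - i)"])
qed

lemma finite_fps_support_prod_list:
  fixes fs :: "'a::comm_semiring_1 fps list"
  shows "\<forall>f\<in>set fs. finite (fps_support f) \<Longrightarrow> finite (fps_support (prod_list fs))"
proof (induction fs)
  case Nil
  have "fps_support (1 :: 'a fps) \<subseteq> {0}" by (auto simp: fps_support_def)
  then show ?case using finite_subset by auto
next
  case (Cons f fs)
  then show ?case using fps_support_mult[of f "prod_list fs"] by (auto intro: finite_subset)
qed

lemma semidomain_N0_fps: "semidomain N0_fps"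
  unfolding semidomain_def N0_fps_def by (auto simp: fps_mult_nth intro!: sum_nonneg)

lemma N0_fps_nonneg: "f \<in> N0_fps \<Longrightarrow> 0 \<le> fps_nth f n"
  unfolding N0_fps_def by blast

lemma N0_fps_mult: "f \<in> N0_fps \<Longrightarrow> g \<in> N0_fps \<Longrightarrow> f * g \<in> N0_fps"
  using semidomain_N0_fps unfolding semidomain_def by blast

lemma N0_fps_prod_list: "\<forall>f\<in>set fs. f \<in> N0_fps \<Longrightarrow> prod_list fs \<in> N0_fps"
proof (induction fs)
  case Nil
  then show ?case by (simp add: N0_fps_def)
next
  case (Cons f fs)
  then show ?case using N0_fps_mult by simp
qed

lemma fps_indicator_in_N0_fps: "fps_indicator A \<in> N0_fps"
  unfolding N0_fps_def by simp

lemma N0_fps_nth_le_mult: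
  assumes "f \<in> N0_fps" "g \<in> N0_fps" "i \<le> n"
  shows "fps_nth f i * fps_nth g (n - i) \<le> fps_nth (f * g) n"
  unfolding fps_mult_nth using assms
  by (intro member_le_sum[where f = "\<lambda>j. fps_nth f j * fps_nth g (n - j)"])
     (auto intro: mult_nonneg_nonneg N0_fps_nonneg)

lemma N0_fps_nth0_eq_1:
  assumes "f \<in> N0_fps" "g \<in> N0_fps" "fps_nth (f * g) 0 = 1"
  shows "fps_nth f 0 = 1" "fps_nth g 0 = 1"
  using assms N0_fps_nonneg[OF assms(1), of 0] N0_fps_nonneg[OF assms(2), of 0]
  by (auto simp: zmult_eq_1_iff)

lemma N0_fps_unit_imp_eq_1:
  assumes "sd_unit N0_fps u"
  shows "u = 1"
proof -
  obtain v where u: "u \<in> N0_fps" and v: "v \<in> N0_fps" "u * v = 1"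
    using assms unfolding sd_unit_def by blast
  have u0: "fps_nth u 0 = 1" and v0: "fps_nth v 0 = 1"
    using N0_fps_nth0_eq_1[OF u v(1)] v(2) by auto
  have "fps_nth u n = 0" if "n \<noteq> 0" for n
    using N0_fps_nth_le_mult[OF u v(1), of n n] N0_fps_nonneg[OF u, of n] v(2) v0 that by simp
  then show ?thesis using u0 by (auto simp: fps_eq_iff)
qed

text \<open>In \<open>(ac)\<^sub>n = \<Sum>\<^sub>i a\<^sub>i c\<^sub>n\<^sub>-\<^sub>i = 1\<close> all terms are nonnegative integers, so exactly one is
nonzero and it equals \<open>1\<close>; in particular \<open>a\<^sub>n = a\<^sub>n c\<^sub>0 \<le> 1\<close> and \<open>c\<^sub>n = a\<^sub>0 c\<^sub>n \<le> 1\<close>.\<close>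

lemma N0_fps_divisor_geometric:
  assumes a: "a \<in> N0_fps" and c: "c \<in> N0_fps" and ac: "a * c = fps_indicator UNIV"
  shows "a = fps_indicator (fps_support a)" "tiling (fps_support a) (fps_support c)"
proof -
  define t where "t i n = fps_nth a i * fps_nth c (n - i)" for i n
  have sum_t: "(\<Sum>i=0..n. t i n) = 1" for n
    using arg_cong[OF ac, of "\<lambda>f. fps_nth f n"] by (simp add: fps_mult_nth t_def)
  have t_nonneg: "0 \<le> t i n" for i n
    unfolding t_def using a c by (intro mult_nonneg_nonneg N0_fps_nonneg)
  have a0: "fps_nth a 0 = 1" and c0: "fps_nth c 0 = 1"
    using N0_fps_nth0_eq_1[OF a c] sum_t[of 0] by (auto simp: t_def)
  have a01: "fps_nth a n \<noteq> 0 \<Longrightarrow> fps_nth a n = 1" for n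
    using N0_fps_nth_le_mult[OF a c, of n n] N0_fps_nonneg[OF a, of n] c0 ac by auto
  have c01: "fps_nth c n \<noteq> 0 \<Longrightarrow> fps_nth c n = 1" for n
    using N0_fps_nth_le_mult[OF a c, of 0 n] N0_fps_nonneg[OF c, of n] a0 ac by auto
  show "a = fps_indicator (fps_support a)"
    using a01 by (auto simp: fps_eq_iff fps_support_def)
  show "tiling (fps_support a) (fps_support c)"
    unfolding tiling_def
  proof (intro conjI allI ballI impI)
    show "0 \<in> fps_support a" "0 \<in> fps_support c" using a0 c0 by (auto simp: fps_support_def)
  next
    fix n
    have "(\<Sum>i=0..n. t i n) \<noteq> 0" using sum_t[of n] by simp
    then obtain i where "i \<le> n" "t i n \<noteq> 0"
      by (meson atLeastAtMost_iff sum.not_neutral_contains_not_neutral)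
    then have "i \<in> fps_support a" "n - i \<in> fps_support c" "n = i + (n - i)"
      by (auto simp: t_def fps_support_def)
    then show "\<exists>i\<in>fps_support a. \<exists>j\<in>fps_support c. n = i + j" by blast
  next
    fix i j i' j'
    assume supp: "i \<in> fps_support a" "j \<in> fps_support c" "i' \<in> fps_support a"
      "j' \<in> fps_support c" and eq: "i + j = i' + j'"
    show "i = i'"
    proof (rule ccontr)
      assume ne: "i \<noteq> i'"
      have "i + j - i' = j'" using eq by simp
      then have "t i (i + j) = fps_nth a i * fps_nth c j" "t i' (i + j) = fps_nth a i' * fps_nth c j'"
        unfolding t_def by simp_all
      moreover have "fps_nth a i = 1" "fps_nth c j = 1" "fps_nth a i' = 1" "fps_nth c j' = 1"
        using supp unfolding fps_support_def by (auto intro!: a01 c01)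
      ultimately have "t i (i + j) = 1" "t i' (i + j) = 1" by simp_all
      moreover have "(\<Sum>k\<in>{i, i'}. t k (i + j)) \<le> (\<Sum>k=0..i + j. t k (i + j))"
        using eq by (intro sum_mono2 t_nonneg) auto
      ultimately show False using ne sum_t[of "i + j"] by simp
    qed
  qed
qed

lemma fps_indicator_block_factor:
  assumes "block_structured d k A"
  shows "fps_indicator A =
    fps_indicator {i. i < d * k \<and> d dvd i} * fps_indicator {n \<in> A. d * k dvd n}"
proof (rule fps_ext)
  fix n
  define D where "D = d * k"
  have D_pos: "0 < D" and dD: "d dvd D" using assms unfolding block_structured_def D_def by auto
  have A_iff: "m \<in> A \<longleftrightarrow> d dvd m \<and> D * (m div D) \<in> A" for m
    using assms unfolding block_structured_def D_def by blast
  \<comment> \<open>the only term of the product that can survive is \<open>i = n mod D\<close>\<close>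
  have term_iff: "(i < D \<and> d dvd i) \<and> (n - i \<in> A \<and> D dvd (n - i)) \<longleftrightarrow> i = n mod D \<and> n \<in> A"
    if "i \<le> n" for i
  proof
    assume h: "(i < D \<and> d dvd i) \<and> (n - i \<in> A \<and> D dvd (n - i))"
    then obtain q where q: "n - i = D * q" by blast
    then have n_eq: "n = D * q + i" using that by simp
    then have "i = n mod D" "n div D = q" using h by simp_all
    moreover have "d dvd n" using h dD n_eq by (metis dvd_add dvd_trans dvd_triv_left)
    moreover have "D * (n div D) \<in> A" using h q \<open>n div D = q\<close> by simp
    ultimately show "i = n mod D \<and> n \<in> A" using A_iff[of n] by blast
  next
    assume h: "i = n mod D \<and> n \<in> A"
    then have "d dvd n" "D * (n div D) \<in> A" using A_iff[of n] by blast+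
    then have "d dvd i" using h dD by (simp add: dvd_mod)
    moreover have "n - i = D * (n div D)" using h by (simp add: minus_mod_eq_mult_div)
    ultimately show "(i < D \<and> d dvd i) \<and> (n - i \<in> A \<and> D dvd (n - i))"
      using h D_pos \<open>D * (n div D) \<in> A\<close> by simp
  qed
  have "fps_nth (fps_indicator {i. i < D \<and> d dvd i} * fps_indicator {n \<in> A. D dvd n}) n
      = (\<Sum>i=0..n. of_bool (i = n mod D \<and> n \<in> A))"
    unfolding fps_mult_nth fps_nth_indicator mem_Collect_eq of_bool_conj[symmetric]
    by (intro sum.cong refl) (simp only: atLeastAtMost_iff term_iff)
  also have "\<dots> = of_bool (n \<in> A)"
    by (cases "n \<in> A") (auto simp: sum.delta')
  finally show "fps_nth (fps_indicator A) n =
      fps_nth (fps_indicator {i. i < d * k \<and> d dvd i} * fps_indicator {n \<in> A. d * k dvd n}) n"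
    by (simp add: D_def)
qed

lemma block_structured_not_atom:
  assumes B: "block_structured d k A" and inf: "infinite A"
  shows "\<not> sd_atom N0_fps (fps_indicator A)"
proof
  assume atom: "sd_atom N0_fps (fps_indicator A)"
  define P Q where "P = {i. i < d * k \<and> d dvd i}" and "Q = {n \<in> A. d * k dvd n}"
  have dk: "1 \<le> d" "2 \<le> k" and A_iff: "\<And>n. n \<in> A \<longleftrightarrow> d dvd n \<and> d * k * (n div (d * k)) \<in> A"
    using B unfolding block_structured_def by blast+
  have "d \<in> P" unfolding P_def using dk by simp
  then have P: "P \<noteq> {}" "P \<noteq> {0}" using dk by auto
  obtain n where n: "n \<in> A" "d * k \<le> n"
    using inf by (metis finite_nat_set_iff_bounded_le not_less_eq_eq nat_le_linear)
  have "d * k * (n div (d * k)) \<in> Q" using A_iff[of n] n(1) unfolding Q_def by simp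
  moreover have "d * k * (n div (d * k)) \<noteq> 0" using n dk by (simp add: div_greater_zero_iff)
  ultimately have Q: "Q \<noteq> {}" "Q \<noteq> {0}" by auto
  have "fps_indicator A = fps_indicator P * fps_indicator Q"
    using fps_indicator_block_factor[OF B] unfolding P_def Q_def .
  then have "sd_unit N0_fps (fps_indicator P) \<or> sd_unit N0_fps (fps_indicator Q)"
    using atom P Q fps_indicator_in_N0_fps fps_indicator_eq_0_iff
    unfolding sd_atom_def by blast
  then show False
    using P Q N0_fps_unit_imp_eq_1 fps_indicator_eq_1_iff by blast
qed

lemma N0_fps_divisor_geometric_not_atom:
  assumes "a \<in> N0_fps" "c \<in> N0_fps" "a * c = fps_indicator UNIV" "infinite (fps_support a)"
  shows "\<not> sd_atom N0_fps a"
proof -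
  have "tiling (fps_support a) (fps_support c)" and a: "a = fps_indicator (fps_support a)"
    using N0_fps_divisor_geometric[OF assms(1-3)] by blast+
  then obtain d k where "block_structured d k (fps_support a)"
    using tiling_block_structured assms(4) by blast
  then show ?thesis using block_structured_not_atom assms(4) a by metis
qed

theorem mainTheorem5:
  shows "semidomain N0_fps \<and> \<not> sd_atomic N0_fps"
proof
  show "semidomain N0_fps" by (rule semidomain_N0_fps)
  let ?g = "fps_indicator UNIV"
  show "\<not> sd_atomic N0_fps"
  proof
    assume "sd_atomic N0_fps"
    moreover have "?g \<in> N0_fps - {0}"
      using fps_indicator_in_N0_fps fps_indicator_eq_0_iff by blast
    moreover have "\<not> sd_unit N0_fps ?g"
      using N0_fps_unit_imp_eq_1 fps_indicator_eq_1_iff by blast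
    ultimately obtain as where atoms: "\<forall>a\<in>set as. sd_atom N0_fps a" and g: "?g = prod_list as"
      unfolding sd_atomic_def by blast
    have "infinite (fps_support (prod_list as))" using g[symmetric] by (simp add: fps_support_def)
    then obtain a where "a \<in> set as" and inf: "infinite (fps_support a)"
      using finite_fps_support_prod_list by blast
    then obtain ys zs where as: "as = ys @ a # zs" by (meson split_list)
    have in_N0: "\<forall>f\<in>set as. f \<in> N0_fps" using atoms unfolding sd_atom_def by blast
    have "prod_list ys * prod_list zs \<in> N0_fps"
      using in_N0 as by (auto intro!: N0_fps_mult N0_fps_prod_list)
    moreover have "a * (prod_list ys * prod_list zs) = ?g" using g as by (simp add: mult.left_commute)
    ultimately show False
      using N0_fps_divisor_geometric_not_atom[of a] inf atoms as in_N0 by auto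
  qed
qed

end
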